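(* Let $n\ge2$, let $\mathcal{S}=\{\boldsymbol{\sigma}(\mathbf{t}):\mathbf{t}\in D\}$ be a rationally parameterisable hypersurface in $\mathbb{R}^n$, and let $O$ be an open subset of $D$ in $\mathbb{R}^{n-1}$ such that $\boldsymbol{\sigma}(O)=\{\boldsymbol{\sigma}(\mathbf{t}):\mathbf{t}\in O\}$ is not contained in any hyperplane of $\mathbb{R}^n$. Let $\mathbf{v}_1,\dots,\mathbf{v}_m$ be distinct points in $\mathbb{R}^n$ and let $P_1,\dots,P_m\in\mathbb{C}(\mathbf{x})$ be rational functions in $\mathbf{x}=(x_1,\dots,x_n)$. If \[\sum_{k=1}^m P_k(\mathbf{x})e^{-i\,\mathbf{v}_k\cdot\mathbf{x}}=0\quad\text{for all }\mathbf{x}\in\boldsymbol{\sigma}(O),\] then $P_k(\mathbf{x})=0$ for all $\mathbf{x}\in\boldsymbol{\sigma}(O)$ and all $k\in\{1,\dots,m\}$.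
   Context: A rationally parameterisable hypersurface is a set $\mathcal{S}=\{\boldsymbol{\sigma}(\mathbf{t}):\mathbf{t}\in D\}\subseteq\mathbb{R}^n$ where $\boldsymbol{\sigma}=(\sigma_1,\dots,\sigma_n)^T:\mathbb{R}^{n-1}\to\mathbb{R}^n$ has rational functions as components and $D\subseteq\mathbb{R}^{n-1}$ is a set on which all $\sigma_j$ are defined. "Hyperplane" means an affine hyperplane $\{\mathbf{x}:\mathbf{a}\cdot\mathbf{x}=b\}$, $\mathbf{a}\neq\mathbf{0}$. $\mathbb{C}(\mathbf{x})$ is the field of complex rational functions in $x_1,\dots,x_n$; the hypothesis includes that the sum is defined on $\boldsymbol{\sigma}(O)$. *)

theory Defs
  imports "HOL-Analysis.Analysis"
begin

definition real_poly_fun :: "(real^'n \<Rightarrow> real) \<Rightarrow> bool" where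
  "real_poly_fun f \<longleftrightarrow> (\<exists>A (c :: ('n \<Rightarrow> nat) \<Rightarrow> real). finite A \<and>
      (\<forall>x. f x = (\<Sum>\<alpha>\<in>A. c \<alpha> * (\<Prod>i\<in>UNIV. (x $ i) ^ (\<alpha> i)))))"

definition complex_poly_fun :: "(real^'n \<Rightarrow> complex) \<Rightarrow> bool" where
  "complex_poly_fun f \<longleftrightarrow> (\<exists>A (c :: ('n \<Rightarrow> nat) \<Rightarrow> complex). finite A \<and>
      (\<forall>x. f x = (\<Sum>\<alpha>\<in>A. c \<alpha> * (\<Prod>i\<in>UNIV. complex_of_real ((x $ i) ^ (\<alpha> i))))))"

definition in_some_hyperplane :: "(real^'n) set \<Rightarrow> bool" where
  "in_some_hyperplane S \<longleftrightarrow> (\<exists>a b. a \<noteq> 0 \<and> S \<subseteq> {x. inner a x = b})"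

end

theory Submission
  imports Defs "HOL-Computational_Algebra.Fundamental_Theorem_Algebra"
    "HOL-Computational_Algebra.Polynomial_Factorial" "HOL-Computational_Algebra.Field_as_Ring"
begin

text \<open>Restricted to the line through two points \<open>t\<^sub>0\<close>, \<open>t\<^sub>1\<close> of the parameter domain, every
  coefficient \<open>p\<^sub>k / q\<^sub>k \<circ> \<sigma>\<close> and every phase \<open>-i v\<^sub>k \<bullet> \<sigma>\<close> is a rational function of one real
  variable. As \<open>\<sigma>(O)\<close> lies in no hyperplane, \<open>t\<^sub>1\<close> can be chosen such that all phase differences
  \<open>(v\<^sub>k - v\<^sub>l) \<bullet> \<sigma>\<close> differ at \<open>t\<^sub>0\<close> and \<open>t\<^sub>1\<close>, so they are nonconstant on the line. It remains to
  see that \<open>exp g\<^sub>1, \<dots>, exp g\<^sub>m\<close> are linearly independent over the rational functions when the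
  \<open>g\<^sub>k\<close> are rational with nonconstant pairwise differences. By induction on \<open>m\<close>: dividing a
  relation by one of its terms and differentiating gives a shorter one, and \<open>f' + h' f = 0\<close> for
  rational \<open>f\<close>, \<open>h\<close> forces \<open>f = 0\<close> or \<open>h\<close> constant, because a logarithmic derivative has only
  simple poles and vanishes at infinity, while the derivative of a nonconstant rational function
  does not.\<close>

definition wronskian :: "'a::idom poly \<Rightarrow> 'a poly \<Rightarrow> 'a poly" where
  "wronskian P Q = pderiv P * Q - P * pderiv Q"

lemma wronskian_mult_common:
  "wronskian (U * d) (V * d) = d\<^sup>2 * wronskian U V"
  by (simp add: wronskian_def pderiv_mult power2_eq_square algebra_simps)

lemma power_order_pred_dvd_pderiv:
  fixes P :: "'a::{idom,semiring_char_0} poly"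
  shows "[:-z, 1:] ^ (order z P - 1) dvd pderiv P"
proof (cases "P = 0 \<or> poly P z \<noteq> 0")
  case True
  then show ?thesis by (auto simp: order_root)
next
  case False
  then show ?thesis by (simp add: order_pderiv order_1)
qed

lemma power_order_dvd_wronskian:
  fixes P Q :: "'a::{idom,semiring_char_0} poly"
  shows "[:-z, 1:] ^ (order z P + order z Q - 1) dvd wronskian P Q"
proof -
  let ?X = "[:-z, 1:]"
  have "?X ^ (order z P - 1 + order z Q) dvd pderiv P * Q"
    unfolding power_add by (intro mult_dvd_mono power_order_pred_dvd_pderiv order_1)
  moreover have "?X ^ (order z P + (order z Q - 1)) dvd P * pderiv Q"
    unfolding power_add by (intro mult_dvd_mono power_order_pred_dvd_pderiv order_1)
  ultimately show ?thesis
    unfolding wronskian_def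
    by (intro dvd_diff) (erule dvd_trans[rotated], rule le_imp_power_dvd, simp)+
qed

lemma degree_pderiv_mult_less:
  fixes P Q :: "'a::{idom,semiring_char_0} poly"
  assumes "degree P + degree Q \<noteq> 0"
  shows "degree (pderiv P * Q) < degree P + degree Q"
proof (cases "degree P = 0")
  case True
  then have "pderiv P = 0" by (simp add: pderiv_eq_0_iff)
  then show ?thesis using assms by simp
next
  case False
  then show ?thesis
    using degree_mult_le[of "pderiv P" Q] degree_pderiv[of P] by linarith
qed

lemma degree_wronskian_less:
  fixes P Q :: "'a::{idom,semiring_char_0} poly"
  assumes "wronskian P Q \<noteq> 0"
  shows "degree (wronskian P Q) < degree P + degree Q"
proof -
  have "\<not> (pderiv P = 0 \<and> pderiv Q = 0)"
    using assms by (auto simp: wronskian_def)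
  then have "degree P + degree Q \<noteq> 0"
    by (auto simp: pderiv_eq_0_iff)
  then have "degree (pderiv P * Q) < degree P + degree Q"
    and "degree (pderiv Q * P) < degree P + degree Q"
    using degree_pderiv_mult_less[of P Q] degree_pderiv_mult_less[of Q P]
    by (simp_all add: add.commute)
  then show ?thesis
    unfolding wronskian_def
    by (metis degree_diff_le_max max_less_iff_conj le_less_trans mult.commute)
qed

text \<open>At a root of \<open>V\<close> which is not a root of \<open>U\<close>, the derivative of \<open>U / V\<close> has a
  pole of exactly one order more than \<open>U / V\<close> itself.\<close>
lemma order_wronskian_at_root:
  fixes U V :: "'a::{idom,semiring_char_0} poly"
  assumes "poly U z \<noteq> 0" "V \<noteq> 0" "poly V z = 0"
  shows "wronskian U V \<noteq> 0" "order z (wronskian U V) = order z V - 1"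
proof -
  let ?X = "[:-z, 1:]"
  define r where "r = order z (pderiv V)"
  have "degree V \<noteq> 0"
  proof
    assume "degree V = 0"
    then obtain c where "V = [:c:]" by (rule degree_eq_zeroE)
    with assms(2,3) show False by simp
  qed
  then have V': "pderiv V \<noteq> 0"
    by (simp add: pderiv_eq_0_iff)
  have oV: "order z V = Suc r"
    unfolding r_def using assms(2,3) by (rule order_pderiv)
  obtain C where C: "pderiv V = ?X ^ r * C" "\<not> ?X dvd C"
    using order_decomp[OF V'] unfolding r_def by blast
  obtain E where E: "V = ?X ^ Suc r * E"
    using order_1[of z V] unfolding oV by (auto elim: dvdE)
  define G where "G = pderiv U * ?X * E - U * C"
  have W: "wronskian U V = ?X ^ r * G"
    unfolding wronskian_def G_def by (subst (1) E, subst C(1)) (simp add: algebra_simps)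
  have "poly G z = - poly U z * poly C z"
    by (simp add: G_def)
  then have Gz: "poly G z \<noteq> 0"
    using assms(1) C(2) by (simp add: poly_eq_0_iff_dvd)
  then show "wronskian U V \<noteq> 0"
    unfolding W by auto
  have "order z G = 0"
    using Gz by (simp add: order_root)
  with Gz show "order z (wronskian U V) = order z V - 1"
    unfolding W oV by (subst order_mult) (auto simp: order_power_n_n)
qed

text \<open>\<open>wronskian P Q / (P * Q)\<close> is the logarithmic derivative of \<open>P / Q\<close> and
  \<open>wronskian U V / V\<^sup>2\<close> the derivative of \<open>U / V\<close>. The former vanishes at infinity, the latter
  does not if \<open>V\<close> is constant.\<close>
lemma wronskian_eq_0_of_log_deriv_constant:
  fixes P Q U V :: "'a::{idom,semiring_char_0} poly"
  assumes "P \<noteq> 0" "Q \<noteq> 0" "V \<noteq> 0" "degree V = 0"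
    and eq: "wronskian P Q * V\<^sup>2 + wronskian U V * P * Q = 0"
  shows "wronskian U V = 0"
proof (rule ccontr)
  assume W: "wronskian U V \<noteq> 0"
  have L: "wronskian P Q * V\<^sup>2 = - (wronskian U V * P * Q)"
    using eq by (simp add: eq_neg_iff_add_eq_0)
  obtain c where "V = [:c:]"
    using assms(4) by (rule degree_eq_zeroE)
  with assms(3) have "degree (wronskian P Q * V\<^sup>2) = degree (wronskian P Q)"
    by (simp add: power2_eq_square)
  moreover have "degree (wronskian U V * P * Q) = degree (wronskian U V) + degree P + degree Q"
    using W assms(1,2) by (simp add: degree_mult_eq)
  moreover have "wronskian P Q \<noteq> 0"
    using L W assms(1,2) by auto
  ultimately show False
    using L degree_wronskian_less[of P Q] by simp
qed

text \<open>The logarithmic derivative of \<open>P / Q\<close> has at most simple poles, the derivative of \<open>U / V\<close>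
  has a pole of order at least two at a root of \<open>V\<close> that is not a root of \<open>U\<close>.\<close>
lemma wronskian_eq_0_of_log_deriv_at_root:
  fixes P Q U V :: "'a::{idom,semiring_char_0} poly"
  assumes "P \<noteq> 0" "Q \<noteq> 0" "V \<noteq> 0" "poly V z = 0" "poly U z \<noteq> 0"
    and eq: "wronskian P Q * V\<^sup>2 + wronskian U V * P * Q = 0"
  shows "wronskian U V = 0"
proof (rule ccontr)
  assume "wronskian U V \<noteq> 0"
  then have WPQ: "wronskian U V * P * Q \<noteq> 0"
    using assms(1,2) by simp
  have L: "wronskian P Q * V\<^sup>2 = - (wronskian U V * P * Q)"
    using eq by (simp add: eq_neg_iff_add_eq_0)
  have "[:-z, 1:] ^ (order z V * 2) dvd V\<^sup>2"
    unfolding power_mult by (intro dvd_power_same order_1)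
  then have "[:-z, 1:] ^ (order z P + order z Q - 1 + order z V * 2) dvd wronskian P Q * V\<^sup>2"
    unfolding power_add by (intro mult_dvd_mono power_order_dvd_wronskian)
  then have "[:-z, 1:] ^ (order z P + order z Q - 1 + order z V * 2) dvd wronskian U V * P * Q"
    unfolding L by simp
  then have "order z P + order z Q - 1 + order z V * 2 \<le> order z (wronskian U V * P * Q)"
    using WPQ by (simp add: order_divides)
  also have "\<dots> = order z V - 1 + order z P + order z Q"
    using WPQ order_wronskian_at_root[OF assms(5,3,4)] by (simp add: order_mult)
  finally show False
    using assms(3,4) by (simp add: order_root)
qed

lemma wronskian_eq_0_of_log_deriv_coprime:
  fixes P Q U V :: "complex poly"
  assumes "P \<noteq> 0" "Q \<noteq> 0" "V \<noteq> 0" "coprime U V"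
    and eq: "wronskian P Q * V\<^sup>2 + wronskian U V * P * Q = 0"
  shows "wronskian U V = 0"
proof (cases "degree V = 0")
  case True
  with assms show ?thesis
    by (intro wronskian_eq_0_of_log_deriv_constant)
next
  case False
  then obtain z where z: "poly V z = 0"
    using fundamental_theorem_of_algebra[of V] constant_degree[of V] by auto
  have "poly U z \<noteq> 0"
  proof
    assume "poly U z = 0"
    with z have "[:-z, 1:] dvd U" "[:-z, 1:] dvd V"
      by (simp_all add: poly_eq_0_iff_dvd)
    with assms(4) have "is_unit [:-z, 1:]"
      using coprime_common_divisor by blast
    then show False
      by (simp add: is_unit_iff_degree)
  qed
  with assms z show ?thesis
    by (intro wronskian_eq_0_of_log_deriv_at_root)
qed

lemma wronskian_eq_0_of_log_deriv:
  fixes P Q U V :: "complex poly"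
  assumes "P \<noteq> 0" "Q \<noteq> 0" "V \<noteq> 0"
    and eq: "wronskian P Q * V\<^sup>2 + wronskian U V * P * Q = 0"
  shows "wronskian U V = 0"
proof -
  define d where "d = gcd U V"
  define U' V' where "U' = U div d" and "V' = V div d"
  have U: "U = U' * d" and V: "V = V' * d"
    by (simp_all add: U'_def V'_def d_def dvd_div_mult_self)
  have "d \<noteq> 0" "V' \<noteq> 0"
    using assms(3) by (simp_all add: V'_def d_def dvd_div_eq_0_iff)
  have "d\<^sup>2 * (wronskian P Q * V'\<^sup>2 + wronskian U' V' * P * Q) = 0"
    using eq unfolding U V wronskian_mult_common by (simp add: power_mult_distrib algebra_simps)
  with \<open>d \<noteq> 0\<close> have "wronskian P Q * V'\<^sup>2 + wronskian U' V' * P * Q = 0"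
    by simp
  moreover have "coprime U' V'"
    unfolding U'_def V'_def d_def using assms(3) by (simp add: div_gcd_coprime)
  ultimately have "wronskian U' V' = 0"
    using wronskian_eq_0_of_log_deriv_coprime assms(1,2) \<open>V' \<noteq> 0\<close> by blast
  then show ?thesis
    unfolding U V wronskian_mult_common by simp
qed

definition rational_on :: "real set \<Rightarrow> (real \<Rightarrow> complex) \<Rightarrow> bool" where
  "rational_on S f \<longleftrightarrow> (\<exists>N M. \<forall>s\<in>S.
     poly M (of_real s) \<noteq> 0 \<and> f s = poly N (of_real s) / poly M (of_real s))"

lemma rational_onI:
  assumes "\<And>s. s \<in> S \<Longrightarrow> f s = poly N (of_real s) / poly M (of_real s)"
    and "\<And>s. s \<in> S \<Longrightarrow> poly M (of_real s) \<noteq> 0"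
  shows "rational_on S f"
  unfolding rational_on_def using assms by blast

lemma rational_onE:
  assumes "rational_on S f"
  obtains N M where "\<And>s. s \<in> S \<Longrightarrow> f s = poly N (of_real s) / poly M (of_real s)"
    and "\<And>s. s \<in> S \<Longrightarrow> poly M (of_real s) \<noteq> 0"
  using assms unfolding rational_on_def by blast

lemma rational_on_subset: "rational_on S f \<Longrightarrow> T \<subseteq> S \<Longrightarrow> rational_on T f"
  unfolding rational_on_def by blast

lemma rational_on_cong: "rational_on S f \<Longrightarrow> (\<And>s. s \<in> S \<Longrightarrow> f s = g s) \<Longrightarrow> rational_on S g"
  unfolding rational_on_def by metis

lemma rational_on_const: "rational_on S (\<lambda>s. c)"
  by (rule rational_onI[where N = "[:c:]" and M = 1]) simp_all

lemma rational_on_of_real: "rational_on S (\<lambda>s. of_real s)"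
  by (rule rational_onI[where N = "[:0, 1:]" and M = 1]) simp_all

lemma rational_on_add:
  assumes "rational_on S f" "rational_on S g"
  shows "rational_on S (\<lambda>s. f s + g s)"
proof -
  obtain N M where f: "\<And>s. s \<in> S \<Longrightarrow> f s = poly N (of_real s) / poly M (of_real s)"
      "\<And>s. s \<in> S \<Longrightarrow> poly M (of_real s) \<noteq> 0"
    using assms(1) by (rule rational_onE) blast
  obtain N' M' where g: "\<And>s. s \<in> S \<Longrightarrow> g s = poly N' (of_real s) / poly M' (of_real s)"
      "\<And>s. s \<in> S \<Longrightarrow> poly M' (of_real s) \<noteq> 0"
    using assms(2) by (rule rational_onE) blast
  show ?thesis
    by (rule rational_onI[where N = "N * M' + N' * M" and M = "M * M'"])
      (simp_all add: f g add_frac_eq)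
qed

lemma rational_on_diff:
  assumes "rational_on S f" "rational_on S g"
  shows "rational_on S (\<lambda>s. f s - g s)"
proof -
  obtain N M where f: "\<And>s. s \<in> S \<Longrightarrow> f s = poly N (of_real s) / poly M (of_real s)"
      "\<And>s. s \<in> S \<Longrightarrow> poly M (of_real s) \<noteq> 0"
    using assms(1) by (rule rational_onE) blast
  obtain N' M' where g: "\<And>s. s \<in> S \<Longrightarrow> g s = poly N' (of_real s) / poly M' (of_real s)"
      "\<And>s. s \<in> S \<Longrightarrow> poly M' (of_real s) \<noteq> 0"
    using assms(2) by (rule rational_onE) blast
  show ?thesis
    by (rule rational_onI[where N = "N * M' - N' * M" and M = "M * M'"])
      (simp_all add: f g diff_frac_eq)
qed

lemma rational_on_mult:
  assumes "rational_on S f" "rational_on S g"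
  shows "rational_on S (\<lambda>s. f s * g s)"
proof -
  obtain N M where f: "\<And>s. s \<in> S \<Longrightarrow> f s = poly N (of_real s) / poly M (of_real s)"
      "\<And>s. s \<in> S \<Longrightarrow> poly M (of_real s) \<noteq> 0"
    using assms(1) by (rule rational_onE) blast
  obtain N' M' where g: "\<And>s. s \<in> S \<Longrightarrow> g s = poly N' (of_real s) / poly M' (of_real s)"
      "\<And>s. s \<in> S \<Longrightarrow> poly M' (of_real s) \<noteq> 0"
    using assms(2) by (rule rational_onE) blast
  show ?thesis
    by (rule rational_onI[where N = "N * N'" and M = "M * M'"]) (simp_all add: f g)
qed

lemma rational_on_divide:
  assumes "rational_on S f" "rational_on S g" "\<And>s. s \<in> S \<Longrightarrow> g s \<noteq> 0"
  shows "rational_on S (\<lambda>s. f s / g s)"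
proof -
  obtain N M where f: "\<And>s. s \<in> S \<Longrightarrow> f s = poly N (of_real s) / poly M (of_real s)"
      "\<And>s. s \<in> S \<Longrightarrow> poly M (of_real s) \<noteq> 0"
    using assms(1) by (rule rational_onE) blast
  obtain N' M' where g: "\<And>s. s \<in> S \<Longrightarrow> g s = poly N' (of_real s) / poly M' (of_real s)"
      "\<And>s. s \<in> S \<Longrightarrow> poly M' (of_real s) \<noteq> 0"
    using assms(2) by (rule rational_onE) blast
  have "poly N' (of_real s) \<noteq> 0" if "s \<in> S" for s
    using assms(3)[OF that] g[OF that] by auto
  then show ?thesis
    by (intro rational_onI[where N = "N * M'" and M = "M * N'"]) (simp_all add: f g)
qed

lemma rational_on_sum:
  "finite A \<Longrightarrow> (\<And>i. i \<in> A \<Longrightarrow> rational_on S (f i)) \<Longrightarrow> rational_on S (\<lambda>s. \<Sum>i\<in>A. f i s)"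
  by (induction A rule: finite_induct) (auto intro: rational_on_add rational_on_const)

lemma rational_on_prod:
  "finite A \<Longrightarrow> (\<And>i. i \<in> A \<Longrightarrow> rational_on S (f i)) \<Longrightarrow> rational_on S (\<lambda>s. \<Prod>i\<in>A. f i s)"
  by (induction A rule: finite_induct) (auto intro: rational_on_mult rational_on_const)

lemma rational_on_power: "rational_on S f \<Longrightarrow> rational_on S (\<lambda>s. f s ^ n)"
  by (induction n) (auto intro: rational_on_mult rational_on_const)

lemma poly_eq_0_if_infinite_real_roots:
  fixes P :: "complex poly"
  assumes "infinite T" "\<And>s. s \<in> T \<Longrightarrow> poly P (of_real s) = 0"
  shows "P = 0"
proof (rule ccontr)
  assume "P \<noteq> 0"
  then have "finite {x. poly P x = 0}"
    by (rule poly_roots_finite)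
  moreover have "of_real ` T \<subseteq> {x. poly P x = 0}"
    using assms(2) by auto
  ultimately have "finite ((of_real :: real \<Rightarrow> complex) ` T)"
    by (rule finite_subset[rotated])
  with assms(1) show False
    by (auto dest: finite_imageD simp: inj_on_def)
qed

lemma rational_on_eq_0:
  assumes "rational_on S f" "T \<subseteq> S" "infinite T" "\<And>s. s \<in> T \<Longrightarrow> f s = 0" "s \<in> S"
  shows "f s = 0"
proof -
  obtain N M where f: "\<And>s. s \<in> S \<Longrightarrow> f s = poly N (of_real s) / poly M (of_real s)"
      "\<And>s. s \<in> S \<Longrightarrow> poly M (of_real s) \<noteq> 0"
    using assms(1) by (rule rational_onE) blast
  have "N = 0"
    using assms(2,4) f by (intro poly_eq_0_if_infinite_real_roots[OF assms(3)]) force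
  with f assms(5) show ?thesis
    by simp
qed

lemma rational_on_constant_extend:
  assumes "rational_on S f" "T \<subseteq> S" "infinite T" "\<exists>c. \<forall>s\<in>T. f s = c"
  shows "\<exists>c. \<forall>s\<in>S. f s = c"
proof -
  from assms(4) obtain c where c: "\<forall>s\<in>T. f s = c" ..
  have "f s - c = 0" if "s \<in> S" for s
    by (rule rational_on_eq_0[OF rational_on_diff[OF assms(1) rational_on_const] assms(2,3) _ that])
      (use c in auto)
  then show ?thesis
    by auto
qed

lemma has_vector_derivative_rational_on:
  fixes N M :: "complex poly"
  assumes "open S" "s \<in> S"
    and "\<And>s. s \<in> S \<Longrightarrow> f s = poly N (of_real s) / poly M (of_real s)"
    and "\<And>s. s \<in> S \<Longrightarrow> poly M (of_real s) \<noteq> 0"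
  shows "(f has_vector_derivative
           poly (wronskian N M) (of_real s) / (poly M (of_real s))\<^sup>2) (at s)"
proof -
  have "((\<lambda>z. poly N z / poly M z) has_field_derivative
      poly (wronskian N M) (of_real s) / (poly M (of_real s))\<^sup>2) (at (of_real s))"
    using DERIV_divide[OF poly_DERIV poly_DERIV assms(4)[OF assms(2)]]
    by (simp add: wronskian_def power2_eq_square)
  from has_vector_derivative_real_field[OF this]
  show ?thesis
    by (rule has_vector_derivative_transform_within_open[OF _ assms(1,2)]) (simp add: assms(3))
qed

lemma rational_on_has_vector_derivative:
  assumes "open S" "rational_on S f" "s \<in> S"
  shows "(f has_vector_derivative vector_derivative f (at s)) (at s)"
  using assms(2)
  by (elim rational_onE)
    (metis has_vector_derivative_rational_on[OF assms(1,3)] vector_derivative_at)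

lemma rational_on_vector_derivative:
  assumes "open S" "rational_on S f"
  shows "rational_on S (\<lambda>s. vector_derivative f (at s))"
proof -
  obtain N M where f: "\<And>s. s \<in> S \<Longrightarrow> f s = poly N (of_real s) / poly M (of_real s)"
      "\<And>s. s \<in> S \<Longrightarrow> poly M (of_real s) \<noteq> 0"
    using assms(2) by (rule rational_onE) blast
  show ?thesis
    by (rule rational_onI[where N = "wronskian N M" and M = "M\<^sup>2"])
      (simp_all add: f vector_derivative_at[OF has_vector_derivative_rational_on[OF assms(1) _ f]])
qed

lemma rational_on_nonzero_ball:
  assumes "open S" "rational_on S f" "s \<in> S" "f s \<noteq> 0"
  obtains e where "e > 0" "ball s e \<subseteq> S" "\<And>t. t \<in> ball s e \<Longrightarrow> f t \<noteq> 0"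
proof -
  have "continuous (at s) f"
    using rational_on_has_vector_derivative[OF assms(1-3)]
    by (rule has_vector_derivative_continuous)
  then obtain e1 where e1: "e1 > 0" "\<And>t. dist s t < e1 \<Longrightarrow> f t \<noteq> 0"
    using continuous_at_avoid[of s f 0] assms(4) by blast
  obtain e2 where e2: "e2 > 0" "ball s e2 \<subseteq> S"
    using assms(1,3) by (rule openE)
  show ?thesis
    by (rule that[of "min e1 e2"]) (use e1 e2 in auto)
qed

lemma clear_denominators_eq_0:
  fixes l w n m b :: "'a::field"
  assumes "m \<noteq> 0" "b \<noteq> 0" "l / m\<^sup>2 + w / b\<^sup>2 * (n / m) = 0"
  shows "l * b\<^sup>2 + w * n * m = 0"
proof -
  have "l * b\<^sup>2 + w * n * m = (l / m\<^sup>2 + w / b\<^sup>2 * (n / m)) * (m\<^sup>2 * b\<^sup>2)"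
    using assms(1,2) by (simp add: divide_simps power2_eq_square)
  with assms(3) show ?thesis
    by simp
qed

text \<open>Equivalently: if \<open>f * exp h\<close> is constant, then \<open>f = 0\<close> or \<open>h\<close> is constant;
  \<open>exp h\<close> is never rational for a nonconstant rational \<open>h\<close>.\<close>
lemma rational_on_ode_zero_or_const:
  assumes "open S" "convex S" "rational_on S f" "rational_on S h"
    and ode: "\<And>s. s \<in> S \<Longrightarrow> vector_derivative f (at s) + vector_derivative h (at s) * f s = 0"
  shows "(\<forall>s\<in>S. f s = 0) \<or> (\<exists>c. \<forall>s\<in>S. h s = c)"
proof (cases "S = {}")
  case False
  obtain N M where f: "\<And>s. s \<in> S \<Longrightarrow> f s = poly N (of_real s) / poly M (of_real s)"
      "\<And>s. s \<in> S \<Longrightarrow> poly M (of_real s) \<noteq> 0"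
    using assms(3) by (rule rational_onE) blast
  obtain A B where h: "\<And>s. s \<in> S \<Longrightarrow> h s = poly A (of_real s) / poly B (of_real s)"
      "\<And>s. s \<in> S \<Longrightarrow> poly B (of_real s) \<noteq> 0"
    using assms(4) by (rule rational_onE) blast
  have f': "vector_derivative f (at s) = poly (wronskian N M) (of_real s) / (poly M (of_real s))\<^sup>2"
    if "s \<in> S" for s
    using has_vector_derivative_rational_on[OF assms(1) that f] by (rule vector_derivative_at)
  have h': "vector_derivative h (at s) = poly (wronskian A B) (of_real s) / (poly B (of_real s))\<^sup>2"
    if "s \<in> S" for s
    using has_vector_derivative_rational_on[OF assms(1) that h] by (rule vector_derivative_at)
  have "infinite S"
    using False \<open>open S\<close> finite_imp_not_open by blast
  moreover have "poly (wronskian N M * B\<^sup>2 + wronskian A B * N * M) (of_real s) = 0" if "s \<in> S" for s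
    using clear_denominators_eq_0[OF f(2)[OF that] h(2)[OF that]
        ode[OF that, unfolded f'[OF that] h'[OF that] f(1)[OF that]]]
    by (simp only: poly_add poly_mult poly_power)
  ultimately have eq: "wronskian N M * B\<^sup>2 + wronskian A B * N * M = 0"
    by (rule poly_eq_0_if_infinite_real_roots)
  obtain s0 where "s0 \<in> S"
    using False by blast
  then have "M \<noteq> 0" "B \<noteq> 0"
    using f(2) h(2) by auto
  then have "N = 0 \<or> wronskian A B = 0"
    using wronskian_eq_0_of_log_deriv[OF _ _ _ eq] by blast
  then show ?thesis
  proof
    assume "N = 0"
    then show ?thesis by (simp add: f(1))
  next
    assume "wronskian A B = 0"
    then have "(h has_vector_derivative 0) (at s within S)" if "s \<in> S" for s
      using has_vector_derivative_rational_on[OF assms(1) that h]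
      by (simp add: has_vector_derivative_at_within)
    then obtain c where "\<And>s. s \<in> S \<Longrightarrow> h s = c"
      using has_vector_derivative_zero_constant[OF assms(2)] by blast
    then show ?thesis by blast
  qed
qed simp

lemma sum_exp_const_vector_derivative:
  assumes "open S" "finite K" "s \<in> S"
    and "\<And>k. k \<in> K \<Longrightarrow> rational_on S (F k)" "\<And>k. k \<in> K \<Longrightarrow> rational_on S (H k)"
    and const: "\<And>s. s \<in> S \<Longrightarrow> (\<Sum>k\<in>K. F k s * exp (H k s)) = c"
  shows "(\<Sum>k\<in>K. (vector_derivative (F k) (at s) + vector_derivative (H k) (at s) * F k s)
            * exp (H k s)) = 0"
proof -
  have "((\<lambda>s. \<Sum>k\<in>K. F k s * exp (H k s)) has_vector_derivative
      (\<Sum>k\<in>K. (vector_derivative (F k) (at s) + vector_derivative (H k) (at s) * F k s)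
            * exp (H k s))) (at s)"
  proof (rule has_vector_derivative_sum)
    fix k assume "k \<in> K"
    note F' = rational_on_has_vector_derivative[OF assms(1) assms(4)[OF \<open>k \<in> K\<close>] assms(3)]
    note H' = rational_on_has_vector_derivative[OF assms(1) assms(5)[OF \<open>k \<in> K\<close>] assms(3)]
    show "((\<lambda>s. F k s * exp (H k s)) has_vector_derivative
        (vector_derivative (F k) (at s) + vector_derivative (H k) (at s) * F k s)
          * exp (H k s)) (at s)"
      using has_vector_derivative_mult[OF F' field_vector_diff_chain_at[OF H' DERIV_exp]]
      by (simp add: o_def algebra_simps)
  qed
  moreover have "((\<lambda>s. \<Sum>k\<in>K. F k s * exp (H k s)) has_vector_derivative 0) (at s)"
    by (rule has_vector_derivative_transform_within_open[OF _ assms(1,3)])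
      (auto simp: const)
  ultimately show ?thesis
    by (rule vector_derivative_unique_at)
qed

text \<open>\<open>T k = (R k / R k\<^sub>1)' + (g k - g k\<^sub>1)' * R k / R k\<^sub>1\<close>: divide the sum by its
  \<open>k\<^sub>1\<close>-th term and differentiate.\<close>
lemma rational_exp_sum_eliminate:
  assumes "open S" "convex S" "finite K" "k\<^sub>1 \<notin> K"
    and R: "\<And>k. k \<in> insert k\<^sub>1 K \<Longrightarrow> rational_on S (R k)"
    and g: "\<And>k. k \<in> insert k\<^sub>1 K \<Longrightarrow> rational_on S (g k)"
    and R1: "\<And>s. s \<in> S \<Longrightarrow> R k\<^sub>1 s \<noteq> 0"
    and sum: "\<And>s. s \<in> S \<Longrightarrow> (\<Sum>k\<in>insert k\<^sub>1 K. R k s * exp (g k s)) = 0"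
  obtains T where "\<And>k. k \<in> K \<Longrightarrow> rational_on S (T k)"
    and "\<And>s. s \<in> S \<Longrightarrow> (\<Sum>k\<in>K. T k s * exp (g k s - g k\<^sub>1 s)) = 0"
    and "\<And>k. k \<in> K \<Longrightarrow> \<forall>s\<in>S. T k s = 0 \<Longrightarrow>
           (\<forall>s\<in>S. R k s = 0) \<or> (\<exists>c. \<forall>s\<in>S. g k s - g k\<^sub>1 s = c)"
proof -
  define F where "F k s = R k s / R k\<^sub>1 s" for k s
  define H where "H k s = g k s - g k\<^sub>1 s" for k s
  define T where "T k s = vector_derivative (F k) (at s) + vector_derivative (H k) (at s) * F k s"
    for k s
  have F: "rational_on S (F k)" and H: "rational_on S (H k)" if "k \<in> K" for k
    using that R g R1 unfolding F_def H_def by (auto intro!: rational_on_divide rational_on_diff)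
  have normalized: "(\<Sum>k\<in>K. F k s * exp (H k s)) = -1" if "s \<in> S" for s
  proof -
    have "R k\<^sub>1 s * exp (g k\<^sub>1 s) * (1 + (\<Sum>k\<in>K. F k s * exp (H k s))) = 0"
      using sum[OF that] R1[OF that] assms(3,4)
      by (simp add: F_def H_def exp_diff sum_distrib_left algebra_simps)
    then show ?thesis
      using R1[OF that] by (simp add: add_eq_0_iff)
  qed
  have "(\<Sum>k\<in>K. T k s * exp (g k s - g k\<^sub>1 s)) = 0" if "s \<in> S" for s
    unfolding T_def H_def[symmetric]
    by (rule sum_exp_const_vector_derivative[OF assms(1,3) that F H normalized])
  moreover have "rational_on S (T k)" if "k \<in> K" for k
    unfolding T_def using F[OF that] H[OF that] assms(1)
    by (intro rational_on_add rational_on_mult rational_on_vector_derivative)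
  moreover have "(\<forall>s\<in>S. R k s = 0) \<or> (\<exists>c. \<forall>s\<in>S. g k s - g k\<^sub>1 s = c)"
    if "k \<in> K" "\<forall>s\<in>S. T k s = 0" for k
    using rational_on_ode_zero_or_const[OF assms(1,2) F[OF that(1)] H[OF that(1)]] that(2) R1
    by (auto simp: T_def F_def H_def)
  ultimately show ?thesis
    using that by blast
qed

lemma rational_exp_sum_eq_0_imp_coeffs_eq_0:
  assumes "finite K" "open S"
    and "\<And>k. k \<in> K \<Longrightarrow> rational_on S (R k)" "\<And>k. k \<in> K \<Longrightarrow> rational_on S (g k)"
    and "\<And>k l. k \<in> K \<Longrightarrow> l \<in> K \<Longrightarrow> k \<noteq> l \<Longrightarrow> \<not> (\<exists>c. \<forall>s\<in>S. g k s - g l s = c)"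
    and "\<And>s. s \<in> S \<Longrightarrow> (\<Sum>k\<in>K. R k s * exp (g k s)) = 0"
  shows "\<forall>k\<in>K. \<forall>s\<in>S. R k s = 0"
  using assms
proof (induction K arbitrary: S R g rule: finite_induct)
  case (insert k\<^sub>1 K)
  have sum: "R k\<^sub>1 s * exp (g k\<^sub>1 s) + (\<Sum>k\<in>K. R k s * exp (g k s)) = 0" if "s \<in> S" for s
    using insert.prems(5)[OF that] insert.hyps by simp
  have "\<forall>k\<in>K. \<forall>s\<in>S. R k s = 0"
  proof (cases "\<forall>s\<in>S. R k\<^sub>1 s = 0")
    case True
    show ?thesis
    proof (rule insert.IH[OF insert.prems(1)])
      show "rational_on S (R k)" "rational_on S (g k)" if "k \<in> K" for k
        using that insert.prems(2,3) by blast+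
      show "\<not> (\<exists>c. \<forall>s\<in>S. g k s - g l s = c)" if "k \<in> K" "l \<in> K" "k \<noteq> l" for k l
        using that insert.prems(4) by blast
    qed (use sum True in auto)
  next
    case False
    then obtain s\<^sub>1 where "s\<^sub>1 \<in> S" "R k\<^sub>1 s\<^sub>1 \<noteq> 0"
      by blast
    then obtain e where e: "e > 0" "ball s\<^sub>1 e \<subseteq> S" "\<And>s. s \<in> ball s\<^sub>1 e \<Longrightarrow> R k\<^sub>1 s \<noteq> 0"
      using rational_on_nonzero_ball[OF insert.prems(1) insert.prems(2)] by blast
    define S' where "S' = ball s\<^sub>1 e"
    have S': "open S'" "convex S'" "S' \<subseteq> S" "infinite S'"
      using e(1,2) finite_imp_not_open[of "ball s\<^sub>1 e"] unfolding S'_def by auto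
    have not_const: "\<not> (\<exists>c. \<forall>s\<in>S'. g k s - g l s = c)"
      if "k \<in> insert k\<^sub>1 K" "l \<in> insert k\<^sub>1 K" "k \<noteq> l" for k l
      using insert.prems(4)[OF that] rational_on_constant_extend[OF _ S'(3,4)]
        rational_on_diff[OF insert.prems(3)[OF that(1)] insert.prems(3)[OF that(2)]] by blast
    obtain T where T: "\<And>k. k \<in> K \<Longrightarrow> rational_on S' (T k)"
        "\<And>s. s \<in> S' \<Longrightarrow> (\<Sum>k\<in>K. T k s * exp (g k s - g k\<^sub>1 s)) = 0"
        "\<And>k. k \<in> K \<Longrightarrow> \<forall>s\<in>S'. T k s = 0 \<Longrightarrow>
           (\<forall>s\<in>S'. R k s = 0) \<or> (\<exists>c. \<forall>s\<in>S'. g k s - g k\<^sub>1 s = c)"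
      using rational_exp_sum_eliminate[OF S'(1,2) insert.hyps(1,2), of R g]
        rational_on_subset[OF insert.prems(2) S'(3)] rational_on_subset[OF insert.prems(3) S'(3)]
        e(3) insert.prems(5) S'(3) unfolding S'_def by blast
    have "\<forall>k\<in>K. \<forall>s\<in>S'. T k s = 0"
    proof (rule insert.IH[OF S'(1) T(1)])
      show "rational_on S' (\<lambda>s. g k s - g k\<^sub>1 s)" if "k \<in> K" for k
        using that by (intro rational_on_diff rational_on_subset[OF insert.prems(3) S'(3)]) auto
      show "\<not> (\<exists>c. \<forall>s\<in>S'. g k s - g k\<^sub>1 s - (g l s - g k\<^sub>1 s) = c)"
        if "k \<in> K" "l \<in> K" "k \<noteq> l" for k l
        using not_const[of k l] that by simp
    qed (use T(2) in auto)
    then have "\<forall>s\<in>S'. R k s = 0" if "k \<in> K" for k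
      using T(3)[OF that] not_const[of k k\<^sub>1] that insert.hyps(2) by auto
    then show ?thesis
      using rational_on_eq_0[OF insert.prems(2) S'(3,4)] by blast
  qed
  moreover have "R k\<^sub>1 s = 0" if "s \<in> S" for s
    using sum[OF that] calculation that by simp
  ultimately show ?case
    by blast
qed simp

lemma continuous_on_real_poly_fun:
  fixes f :: "real^'m::finite \<Rightarrow> real"
  assumes "real_poly_fun f"
  shows "continuous_on X f"
proof -
  obtain A and c :: "('m \<Rightarrow> nat) \<Rightarrow> real" where "finite A"
    and f: "\<And>x. f x = (\<Sum>\<alpha>\<in>A. c \<alpha> * (\<Prod>i\<in>UNIV. (x $ i) ^ (\<alpha> i)))"
    using assms unfolding real_poly_fun_def by blast
  have "continuous_on X (\<lambda>x. \<Sum>\<alpha>\<in>A. c \<alpha> * (\<Prod>i\<in>UNIV. (x $ i) ^ (\<alpha> i)))"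
    by (intro continuous_intros)
  then show ?thesis
    unfolding f[abs_def] .
qed

lemma rational_on_real_poly_fun_line:
  fixes f :: "real^'m::finite \<Rightarrow> real"
  assumes "real_poly_fun f"
  shows "rational_on S (\<lambda>s. of_real (f (t + s *\<^sub>R w)))"
proof -
  obtain A and c :: "('m \<Rightarrow> nat) \<Rightarrow> real" where "finite A"
    and f: "\<And>x. f x = (\<Sum>\<alpha>\<in>A. c \<alpha> * (\<Prod>i\<in>UNIV. (x $ i) ^ (\<alpha> i)))"
    using assms unfolding real_poly_fun_def by blast
  have "rational_on S (\<lambda>s. \<Sum>\<alpha>\<in>A. of_real (c \<alpha>) *
      (\<Prod>i\<in>UNIV. (of_real (t $ i) + of_real s * of_real (w $ i)) ^ (\<alpha> i)))"
    by (intro rational_on_sum \<open>finite A\<close> rational_on_mult rational_on_const rational_on_prod finite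
        rational_on_power rational_on_add rational_on_of_real)
  then show ?thesis
    by (rule rational_on_cong) (simp add: f)
qed

lemma rational_on_complex_poly_fun_comp:
  fixes p :: "real^'n::finite \<Rightarrow> complex"
  assumes "complex_poly_fun p" "\<And>i. rational_on S (\<lambda>s. of_real (X s $ i))"
  shows "rational_on S (\<lambda>s. p (X s))"
proof -
  obtain A and c :: "('n \<Rightarrow> nat) \<Rightarrow> complex" where "finite A"
    and p: "\<And>x. p x = (\<Sum>\<alpha>\<in>A. c \<alpha> * (\<Prod>i\<in>UNIV. of_real ((x $ i) ^ (\<alpha> i))))"
    using assms(1) unfolding complex_poly_fun_def by blast
  have "rational_on S (\<lambda>s. \<Sum>\<alpha>\<in>A. c \<alpha> * (\<Prod>i\<in>UNIV. (of_real (X s $ i)) ^ (\<alpha> i)))"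
    by (intro rational_on_sum \<open>finite A\<close> rational_on_mult rational_on_const rational_on_prod finite
        rational_on_power assms(2))
  then show ?thesis
    by (rule rational_on_cong) (simp add: p)
qed

lemma rational_on_inner_comp:
  fixes X :: "real \<Rightarrow> real^'n::finite"
  assumes "\<And>i. rational_on S (\<lambda>s. of_real (X s $ i))"
  shows "rational_on S (\<lambda>s. of_real (inner c (X s)))"
proof -
  have "rational_on S (\<lambda>s. \<Sum>i\<in>UNIV. of_real (c $ i) * of_real (X s $ i))"
    by (intro rational_on_sum finite rational_on_mult rational_on_const assms)
  then show ?thesis
    by (rule rational_on_cong) (simp add: inner_vec_def)
qed

lemma open_dense_finite_Inter:
  fixes G :: "'i \<Rightarrow> 'a::topological_space set"
  assumes "finite I" "open V" "V \<noteq> {}" "V \<subseteq> U"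
    and "\<And>i. i \<in> I \<Longrightarrow> open (G i)"
    and "\<And>i W. i \<in> I \<Longrightarrow> open W \<Longrightarrow> W \<noteq> {} \<Longrightarrow> W \<subseteq> U \<Longrightarrow> W \<inter> G i \<noteq> {}"
  shows "V \<inter> (\<Inter>i\<in>I. G i) \<noteq> {}"
  using assms
proof (induction I arbitrary: V rule: finite_induct)
  case (insert i I)
  have "V \<inter> G i \<inter> (\<Inter>i\<in>I. G i) \<noteq> {}"
    using insert.prems by (intro insert.IH) auto
  then show ?case
    by auto
qed simp

definition rat_param :: "('n \<Rightarrow> real^'m \<Rightarrow> real) \<Rightarrow> ('n \<Rightarrow> real^'m \<Rightarrow> real) \<Rightarrow> real^'m \<Rightarrow> real^'n"
  where "rat_param a b t = (\<chi> j. a j t / b j t)"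

locale rational_parametrisation =
  fixes a b :: "'n::finite \<Rightarrow> real^'m::finite \<Rightarrow> real" and D :: "(real^'m) set"
  assumes a_poly: "\<And>j. real_poly_fun (a j)"
    and b_poly: "\<And>j. real_poly_fun (b j)"
    and b_nonzero: "\<And>j t. t \<in> D \<Longrightarrow> b j t \<noteq> 0"
begin

lemma continuous_on_rat_param: "continuous_on D (rat_param a b)"
  unfolding rat_param_def
  by (intro continuous_on_vec_lambda continuous_on_divide continuous_on_real_poly_fun a_poly b_poly)
    (simp add: b_nonzero)

lemma rational_on_rat_param_line:
  assumes "\<And>s. s \<in> S \<Longrightarrow> t + s *\<^sub>R w \<in> D"
  shows "rational_on S (\<lambda>s. of_real (rat_param a b (t + s *\<^sub>R w) $ j))"
proof -
  have "rational_on S (\<lambda>s. of_real (a j (t + s *\<^sub>R w)) / of_real (b j (t + s *\<^sub>R w)))"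
    using assms b_nonzero
    by (intro rational_on_divide rational_on_real_poly_fun_line a_poly b_poly) simp
  then show ?thesis
    by (rule rational_on_cong) (simp add: rat_param_def)
qed

text \<open>Along the line through a point of \<open>V\<close> and \<open>t\<close>, the function is rational, and it is
  constant near the point of \<open>V\<close>.\<close>
lemma inner_rat_param_const_extend:
  assumes "open V" "V \<noteq> {}" "V \<subseteq> D" "t \<in> D"
    and const: "\<And>t. t \<in> V \<Longrightarrow> inner c (rat_param a b t) = c\<^sub>0"
  shows "inner c (rat_param a b t) = c\<^sub>0"
proof -
  obtain t\<^sub>0 where "t\<^sub>0 \<in> V"
    using assms(2) by blast
  define line where "line s = t\<^sub>0 + s *\<^sub>R (t - t\<^sub>0)" for s
  define f where "f s = complex_of_real (inner c (rat_param a b (line s)))" for s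
  have "open (line -` V)"
    unfolding line_def using assms(1) by (intro continuous_open_vimage continuous_intros)
  moreover have "0 \<in> line -` V"
    using \<open>t\<^sub>0 \<in> V\<close> by (simp add: line_def)
  ultimately have inf: "infinite (line -` V)"
    using finite_imp_not_open[of "line -` V"] by blast
  have rat: "rational_on (line -` D) (\<lambda>s. f s - of_real c\<^sub>0)"
    unfolding f_def line_def
    by (intro rational_on_diff rational_on_const rational_on_inner_comp rational_on_rat_param_line)
      auto
  have sub: "line -` V \<subseteq> line -` D" and one: "1 \<in> line -` D"
    using assms(3,4) by (auto simp: line_def)
  have "f 1 - of_real c\<^sub>0 = 0"
    by (rule rational_on_eq_0[OF rat sub inf _ one]) (simp add: f_def const)
  then show ?thesis
    by (simp add: f_def line_def)
qed

lemma rat_param_separating_point: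
  assumes "open U" "U \<subseteq> D" "\<not> in_some_hyperplane (rat_param a b ` U)"
    and "finite C" "0 \<notin> C" "t\<^sub>0 \<in> U"
  obtains t\<^sub>1 where "t\<^sub>1 \<in> U"
    and "\<And>c. c \<in> C \<Longrightarrow> inner c (rat_param a b t\<^sub>1) \<noteq> inner c (rat_param a b t\<^sub>0)"
proof -
  define G where "G c = U \<inter> (\<lambda>t. inner c (rat_param a b t)) -` (- {inner c (rat_param a b t\<^sub>0)})"
    for c
  have "open (G c)" for c
    unfolding G_def using assms(1) continuous_on_subset[OF continuous_on_rat_param assms(2)]
    by (intro continuous_open_preimage continuous_intros) auto
  moreover have "W \<inter> G c \<noteq> {}" if "c \<in> C" "open W" "W \<noteq> {}" "W \<subseteq> U" for c W
  proof
    assume empty: "W \<inter> G c = {}"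
    have "W \<subseteq> D"
      using \<open>W \<subseteq> U\<close> assms(2) by blast
    have "inner c (rat_param a b t) = inner c (rat_param a b t\<^sub>0)" if "t \<in> D" for t
      by (rule inner_rat_param_const_extend[OF \<open>open W\<close> \<open>W \<noteq> {}\<close> \<open>W \<subseteq> D\<close> that])
        (use empty \<open>W \<subseteq> U\<close> in \<open>auto simp: G_def\<close>)
    then have "rat_param a b ` U \<subseteq> {x. inner c x = inner c (rat_param a b t\<^sub>0)}"
      using assms(2) by auto
    moreover have "c \<noteq> 0"
      using assms(5) \<open>c \<in> C\<close> by auto
    ultimately have "in_some_hyperplane (rat_param a b ` U)"
      unfolding in_some_hyperplane_def by blast
    with assms(3) show False ..
  qed
  ultimately have "U \<inter> (\<Inter>c\<in>C. G c) \<noteq> {}"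
    using open_dense_finite_Inter[OF assms(4,1) _ order_refl, of G] assms(6) by blast
  then show ?thesis
    using that unfolding G_def by blast
qed

lemma rat_param_separating_point_pairs:
  assumes "open U" "U \<subseteq> D" "\<not> in_some_hyperplane (rat_param a b ` U)"
    and "finite K" "inj_on v K" "t\<^sub>0 \<in> U"
  obtains t\<^sub>1 where "t\<^sub>1 \<in> U"
    and "\<And>k l. k \<in> K \<Longrightarrow> l \<in> K \<Longrightarrow> k \<noteq> l \<Longrightarrow>
      inner (v k - v l) (rat_param a b t\<^sub>1) \<noteq> inner (v k - v l) (rat_param a b t\<^sub>0)"
proof -
  define C where "C = (\<lambda>(k, l). v k - v l) ` {(k, l). k \<in> K \<and> l \<in> K \<and> k \<noteq> l}"
  have "finite C"
    unfolding C_def by (rule finite_imageI, rule finite_subset[of _ "K \<times> K"]) (auto simp: assms(4))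
  have "0 \<notin> C"
  proof
    assume "0 \<in> C"
    then obtain k l where "k \<in> K" "l \<in> K" "k \<noteq> l" "v k = v l"
      unfolding C_def by auto
    with inj_onD[OF assms(5)] show False
      by blast
  qed
  obtain t\<^sub>1 where "t\<^sub>1 \<in> U"
    and "\<And>c. c \<in> C \<Longrightarrow> inner c (rat_param a b t\<^sub>1) \<noteq> inner c (rat_param a b t\<^sub>0)"
    using rat_param_separating_point[OF assms(1-3) \<open>finite C\<close> \<open>0 \<notin> C\<close> assms(6)] by blast
  with that show ?thesis
    unfolding C_def by blast
qed

lemma coeffs_eq_0_at_separated_point:
  fixes p q :: "'i \<Rightarrow> real^'n \<Rightarrow> complex" and v :: "'i \<Rightarrow> real^'n"
  assumes "open U" "U \<subseteq> D" "t\<^sub>0 \<in> U" "t\<^sub>1 \<in> U" "finite K"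
    and p: "\<And>k. k \<in> K \<Longrightarrow> complex_poly_fun (p k)"
    and q: "\<And>k. k \<in> K \<Longrightarrow> complex_poly_fun (q k)"
    and q_nonzero: "\<And>k t. k \<in> K \<Longrightarrow> t \<in> U \<Longrightarrow> q k (rat_param a b t) \<noteq> 0"
    and separated: "\<And>k l. k \<in> K \<Longrightarrow> l \<in> K \<Longrightarrow> k \<noteq> l \<Longrightarrow>
       inner (v k - v l) (rat_param a b t\<^sub>1) \<noteq> inner (v k - v l) (rat_param a b t\<^sub>0)"
    and sum: "\<And>t. t \<in> U \<Longrightarrow> (\<Sum>k\<in>K. p k (rat_param a b t) / q k (rat_param a b t)
       * exp (- \<i> * of_real (inner (v k) (rat_param a b t)))) = 0"
  shows "\<forall>k\<in>K. p k (rat_param a b t\<^sub>0) / q k (rat_param a b t\<^sub>0) = 0"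
proof -
  define line where "line s = t\<^sub>0 + s *\<^sub>R (t\<^sub>1 - t\<^sub>0)" for s
  define S where "S = line -` U"
  define R where "R k s = p k (rat_param a b (line s)) / q k (rat_param a b (line s))" for k s
  define g where "g k s = - \<i> * of_real (inner (v k) (rat_param a b (line s)))" for k s
  have "open S"
    unfolding S_def line_def using assms(1) by (intro continuous_open_vimage continuous_intros)
  have S0: "0 \<in> S" and S1: "1 \<in> S"
    using assms(3,4) by (simp_all add: S_def line_def)
  have coords: "rational_on S (\<lambda>s. of_real (rat_param a b (line s) $ j))" for j
    unfolding line_def using assms(2)
    by (intro rational_on_rat_param_line) (auto simp: S_def line_def)
  have "\<forall>k\<in>K. \<forall>s\<in>S. R k s = 0"
  proof (rule rational_exp_sum_eq_0_imp_coeffs_eq_0[OF assms(5) \<open>open S\<close>])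
    show "rational_on S (R k)" if "k \<in> K" for k
      unfolding R_def
      by (rule rational_on_divide[OF rational_on_complex_poly_fun_comp[OF p[OF that] coords]
            rational_on_complex_poly_fun_comp[OF q[OF that] coords]])
        (use q_nonzero[OF that] in \<open>auto simp: S_def\<close>)
    show "rational_on S (g k)" for k
      unfolding g_def by (intro rational_on_mult rational_on_const rational_on_inner_comp coords)
    show "\<not> (\<exists>c. \<forall>s\<in>S. g k s - g l s = c)" if "k \<in> K" "l \<in> K" "k \<noteq> l" for k l
    proof
      assume "\<exists>c. \<forall>s\<in>S. g k s - g l s = c"
      then have "g k 1 - g l 1 = g k 0 - g l 0"
        using S0 S1 by metis
      moreover have
        "g k s - g l s = - \<i> * of_real (inner (v k - v l) (rat_param a b (line s)))" for s
        by (simp add: g_def inner_diff_left right_diff_distrib)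
      ultimately show False
        using separated[OF that] by (simp add: line_def)
    qed
    show "(\<Sum>k\<in>K. R k s * exp (g k s)) = 0" if "s \<in> S" for s
      using sum that unfolding R_def g_def S_def by simp
  qed
  then have "\<forall>k\<in>K. R k 0 = 0"
    using S0 by blast
  then show ?thesis
    by (simp add: R_def line_def)
qed

end

theorem theorem4:
  fixes a b :: "'n::finite \<Rightarrow> real^'m::finite \<Rightarrow> real"
    and D U :: "(real^'m) set"
    and m :: nat
    and v :: "nat \<Rightarrow> real^'n"
    and p q :: "nat \<Rightarrow> real^'n \<Rightarrow> complex"
  assumes dim: "CARD('n) = CARD('m) + 1"
    and n2: "CARD('n) \<ge> 2"
    and a_poly: "\<And>j. real_poly_fun (a j)"
    and b_poly: "\<And>j. real_poly_fun (b j)"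
    and b_nz: "\<And>j t. t \<in> D \<Longrightarrow> b j t \<noteq> 0"
    and O_open: "open U" and O_sub: "U \<subseteq> D"
    and not_hyp: "\<not> in_some_hyperplane ((\<lambda>t. \<chi> j. a j t / b j t) ` U)"
    and v_dist: "inj_on v {1..m}"
    and p_poly: "\<And>k. complex_poly_fun (p k)"
    and q_poly: "\<And>k. complex_poly_fun (q k)"
    and q_nz: "\<And>k x. k \<in> {1..m} \<Longrightarrow> x \<in> (\<lambda>t. \<chi> j. a j t / b j t) ` U \<Longrightarrow> q k x \<noteq> 0"
    and sum0: "\<And>x. x \<in> (\<lambda>t. \<chi> j. a j t / b j t) ` U \<Longrightarrow>
       (\<Sum>k=1..m. (p k x / q k x) * exp (- \<i> * complex_of_real (inner (v k) x))) = 0"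
  shows "\<forall>k\<in>{1..m}. \<forall>x\<in>(\<lambda>t. \<chi> j. a j t / b j t) ` U. p k x / q k x = 0"
proof -
  interpret rational_parametrisation a b D
    by unfold_locales (fact a_poly b_poly b_nz)+
  have \<sigma>: "(\<lambda>t. \<chi> j. a j t / b j t) = rat_param a b"
    by (simp add: rat_param_def fun_eq_iff)
  have "\<forall>k\<in>{1..m}. p k (rat_param a b t\<^sub>0) / q k (rat_param a b t\<^sub>0) = 0" if t\<^sub>0: "t\<^sub>0 \<in> U" for t\<^sub>0
  proof -
    obtain t\<^sub>1 where t\<^sub>1: "t\<^sub>1 \<in> U" and separated: "\<And>k l. k \<in> {1..m} \<Longrightarrow> l \<in> {1..m} \<Longrightarrow>
        k \<noteq> l \<Longrightarrow> inner (v k - v l) (rat_param a b t\<^sub>1) \<noteq> inner (v k - v l) (rat_param a b t\<^sub>0)"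
      using rat_param_separating_point_pairs[OF O_open O_sub not_hyp[unfolded \<sigma>] _ v_dist t\<^sub>0]
      by blast
    show ?thesis
      by (rule coeffs_eq_0_at_separated_point[OF O_open O_sub t\<^sub>0 t\<^sub>1 finite_atLeastAtMost
            p_poly q_poly q_nz[unfolded \<sigma>, OF _ imageI] separated sum0[unfolded \<sigma>, OF imageI]])
  qed
  then show ?thesis
    unfolding \<sigma> by blast
qed

end
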